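(* Let $S$ be an abelian semigroup (written additively, containing an identity element $0$), let $r \geq 1$, and let $A_1,\ldots,A_r, B$ be finite, nonempty subsets of $S$. Then there exists a polynomial $p(z_1,\ldots,z_r)$ such that \[ |B + h_1A_1 + \cdots + h_rA_r| = p(h_1,\ldots,h_r) \] for all nonnegative integers $h_1,\ldots,h_r$ with $\min(h_1,\ldots,h_r)$ sufficiently large.
   Context: For a nonempty subset $A$ of $S$ and a positive integer $h$, $hA$ denotes the set of all sums of $h$ not necessarily distinct elements of $A$, and $0A = \{0\}$. For nonempty subsets $A_1,\ldots,A_r,B$ of $S$ and nonnegative integers $h_1,\ldots,h_r$, $B + h_1A_1 + \cdots + h_rA_r$ denotes the set of all elements of $S$ of the form $b + u_1 + \cdots + u_r$ with $b \in B$ and $u_i \in h_iA_i$ for each $i$. $|X|$ denotes the cardinality of a set $X$. *)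

theory Defs
  imports Complex_Main
begin

definition hfold_sumset :: "nat \<Rightarrow> 'a::comm_monoid_add set \<Rightarrow> 'a set" where
  "hfold_sumset h A = {sum_list xs | xs. length xs = h \<and> set xs \<subseteq> A}"

text \<open>B + h_0 A_0 + ... + h_{r-1} A_{r-1} (indices shifted to 0..r-1).\<close>
definition multi_sumset ::
  "'a::comm_monoid_add set \<Rightarrow> (nat \<Rightarrow> 'a set) \<Rightarrow> (nat \<Rightarrow> nat) \<Rightarrow> nat \<Rightarrow> 'a set" where
  "multi_sumset B A h r =
     {b + (\<Sum>i<r. u i) | b u. b \<in> B \<and> (\<forall>i<r. u i \<in> hfold_sumset (h i) (A i))}"

definition is_poly_fun :: "nat \<Rightarrow> ((nat \<Rightarrow> nat) \<Rightarrow> real) \<Rightarrow> bool" where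
  "is_poly_fun r p \<longleftrightarrow> (\<exists>E c. finite E \<and> (\<forall>e\<in>E. \<forall>i\<ge>r. e i = 0) \<and>
     (\<forall>h. p h = (\<Sum>e\<in>E. c e * (\<Prod>i<r. real (h i) ^ e i))))"

end

theory Submission
  imports Defs "HOL-Library.Ramsey" "HOL-Library.FuncSet" "HOL-Library.Function_Algebras"
    "HOL-Library.List_Lexorder"
begin

text \<open>Enumerate \<open>A\<^sub>i = {e i 0, ..., e i (k\<^sub>i - 1)}\<close>. Every element of the sumset has the form
  \<open>b + \<Sum> x(i,j) \<cdot> e i j\<close> with \<open>b \<in> B\<close> and \<open>x\<close> a nonnegative integer array whose \<open>i\<close>-th row
  sums to \<open>h\<^sub>i\<close>, so the sumset is the image of \<open>B \<times> L(h)\<close>, where \<open>L(h)\<close> is the layer of such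
  arrays. Order the pairs \<open>(b, x)\<close> lexicographically; this order is compatible with adding a
  fixed array to \<open>x\<close>, so for each \<open>b\<close> the set \<open>U\<^sub>b\<close> of arrays \<open>x\<close> for which \<open>(b, x)\<close> is not the
  least representative of its value within its layer is closed upward, and the sumset has
  exactly \<open>\<Sum>\<^sub>b |L(h) - U\<^sub>b|\<close> elements. By Dickson's lemma each \<open>U\<^sub>b\<close> is a finite union of
  principal upsets, so by inclusion-exclusion \<open>|L(h) \<inter> U\<^sub>b|\<close> is an alternating sum of sizes of
  shifted layers. A layer has \<open>\<Prod>\<^sub>i ((h\<^sub>i + k\<^sub>i - 1) choose (k\<^sub>i - 1))\<close> elements, which is a
  polynomial in \<open>h\<close>; after a shift by \<open>d\<close> this stays true as soon as all \<open>h\<^sub>i \<ge> d\<^sub>i\<close>.\<close>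

section \<open>Polynomial and eventually polynomial functions\<close>

lemma is_poly_funI:
  assumes "finite T" "\<forall>t\<in>T. \<forall>i\<ge>r. ex t i = 0"
    and "\<And>h. p h = (\<Sum>t\<in>T. a t * (\<Prod>i<r. real (h i) ^ ex t i))"
  shows "is_poly_fun r p"
proof -
  define c where "c e = (\<Sum>t\<in>{t\<in>T. ex t = e}. a t)" for e
  have "p h = (\<Sum>e\<in>ex ` T. c e * (\<Prod>i<r. real (h i) ^ e i))" for h
  proof -
    have "(\<Sum>e\<in>ex ` T. c e * (\<Prod>i<r. real (h i) ^ e i))
        = (\<Sum>e\<in>ex ` T. \<Sum>t\<in>{t\<in>T. ex t = e}. a t * (\<Prod>i<r. real (h i) ^ ex t i))"
      unfolding c_def sum_distrib_right by (rule sum.cong) auto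
    also have "\<dots> = (\<Sum>t\<in>T. a t * (\<Prod>i<r. real (h i) ^ ex t i))"
      by (rule sum.group) (use assms(1) in auto)
    finally show ?thesis using assms(3) by simp
  qed
  then show ?thesis
    unfolding is_poly_fun_def using assms(1,2) by (intro exI[of _ "ex ` T"] exI[of _ c]) auto
qed

lemma is_poly_funE:
  assumes "is_poly_fun r p"
  obtains E c where "finite E" "\<forall>e\<in>E. \<forall>i\<ge>r. e i = 0"
    "\<And>h. p h = (\<Sum>e\<in>E. c e * (\<Prod>i<r. real (h i) ^ e i))"
  using assms unfolding is_poly_fun_def by blast

lemma is_poly_fun_const: "is_poly_fun r (\<lambda>h. c)"
  by (rule is_poly_funI[where T = "{()}" and ex = "\<lambda>_ _. 0" and a = "\<lambda>_. c"]) auto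

lemma is_poly_fun_coord:
  assumes "i < r"
  shows "is_poly_fun r (\<lambda>h. real (h i))"
proof (rule is_poly_funI[where T = "{()}" and ex = "\<lambda>_. (\<lambda>j. 0)(i := 1)" and a = "\<lambda>_. 1"])
  fix h
  have "(\<Prod>j<r. real (h j) ^ ((\<lambda>j. 0)(i := 1)) j) = (\<Prod>j<r. if j = i then real (h j) else 1)"
    by (rule prod.cong) auto
  then show "real (h i) = (\<Sum>t\<in>{()}. 1 * (\<Prod>j<r. real (h j) ^ ((\<lambda>j. 0)(i := 1)) j))"
    using assms by (simp add: prod.delta)
qed (use assms in auto)

lemma is_poly_fun_add:
  assumes "is_poly_fun r p" "is_poly_fun r q"
  shows "is_poly_fun r (\<lambda>h. p h + q h)"
proof -
  obtain E1 c1 where 1: "finite E1" "\<forall>e\<in>E1. \<forall>i\<ge>r. e i = 0"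
    "\<And>h. p h = (\<Sum>e\<in>E1. c1 e * (\<Prod>i<r. real (h i) ^ e i))"
    using assms(1) by (elim is_poly_funE) blast
  obtain E2 c2 where 2: "finite E2" "\<forall>e\<in>E2. \<forall>i\<ge>r. e i = 0"
    "\<And>h. q h = (\<Sum>e\<in>E2. c2 e * (\<Prod>i<r. real (h i) ^ e i))"
    using assms(2) by (elim is_poly_funE) blast
  show ?thesis
    by (rule is_poly_funI[where T = "E1 <+> E2" and ex = "case_sum id id" and a = "case_sum c1 c2"])
      (use 1 2 in \<open>auto simp: sum.Plus\<close>)
qed

lemma is_poly_fun_mult:
  assumes "is_poly_fun r p" "is_poly_fun r q"
  shows "is_poly_fun r (\<lambda>h. p h * q h)"
proof -
  obtain E1 c1 where 1: "finite E1" "\<forall>e\<in>E1. \<forall>i\<ge>r. e i = 0"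
    "\<And>h. p h = (\<Sum>e\<in>E1. c1 e * (\<Prod>i<r. real (h i) ^ e i))"
    using assms(1) by (elim is_poly_funE) blast
  obtain E2 c2 where 2: "finite E2" "\<forall>e\<in>E2. \<forall>i\<ge>r. e i = 0"
    "\<And>h. q h = (\<Sum>e\<in>E2. c2 e * (\<Prod>i<r. real (h i) ^ e i))"
    using assms(2) by (elim is_poly_funE) blast
  show ?thesis
  proof (rule is_poly_funI[where T = "E1 \<times> E2" and ex = "\<lambda>(e1, e2) i. e1 i + e2 i"
        and a = "\<lambda>(e1, e2). c1 e1 * c2 e2"])
    fix h
    show "p h * q h = (\<Sum>t\<in>E1 \<times> E2. (case t of (e1, e2) \<Rightarrow> c1 e1 * c2 e2) *
        (\<Prod>i<r. real (h i) ^ (case t of (e1, e2) \<Rightarrow> \<lambda>i. e1 i + e2 i) i))"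
      by (simp add: 1(3) 2(3) sum_product sum.cartesian_product power_add prod.distrib
          split_def algebra_simps)
  qed (use 1 2 in auto)
qed

lemma is_poly_fun_diff:
  assumes "is_poly_fun r p" "is_poly_fun r q"
  shows "is_poly_fun r (\<lambda>h. p h - q h)"
  using is_poly_fun_add[OF assms(1) is_poly_fun_mult[OF is_poly_fun_const assms(2)], of "-1"]
  by simp

lemma is_poly_fun_prod:
  "finite S \<Longrightarrow> (\<And>s. s \<in> S \<Longrightarrow> is_poly_fun r (f s)) \<Longrightarrow> is_poly_fun r (\<lambda>h. \<Prod>s\<in>S. f s h)"
  by (induction S rule: finite_induct) (auto intro: is_poly_fun_const is_poly_fun_mult)

definition eventually_poly :: "nat \<Rightarrow> ((nat \<Rightarrow> nat) \<Rightarrow> real) \<Rightarrow> bool" where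
  "eventually_poly r f \<longleftrightarrow>
     (\<exists>p. is_poly_fun r p \<and> (\<exists>N. \<forall>h. (\<forall>i<r. N \<le> h i) \<longrightarrow> f h = p h))"

lemma eventually_polyI:
  assumes "is_poly_fun r p" "\<And>h. \<forall>i<r. N \<le> h i \<Longrightarrow> f h = p h"
  shows "eventually_poly r f"
  using assms unfolding eventually_poly_def by blast

lemma eventually_polyE:
  assumes "eventually_poly r f"
  obtains p N where "is_poly_fun r p" "\<And>h. \<forall>i<r. N \<le> h i \<Longrightarrow> f h = p h"
  using assms unfolding eventually_poly_def by blast

lemma eventually_poly_cong:
  assumes "eventually_poly r g" "\<And>h. \<forall>i<r. N \<le> h i \<Longrightarrow> f h = g h"
  shows "eventually_poly r f"
proof -
  obtain p M where "is_poly_fun r p" "\<And>h. \<forall>i<r. M \<le> h i \<Longrightarrow> g h = p h"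
    using assms(1) by (elim eventually_polyE) blast
  then show ?thesis
    using assms(2) by (intro eventually_polyI[where N = "max N M"]) auto
qed

lemma eventually_poly_add:
  assumes "eventually_poly r f" "eventually_poly r g"
  shows "eventually_poly r (\<lambda>h. f h + g h)"
proof -
  obtain p N where "is_poly_fun r p" "\<And>h. \<forall>i<r. N \<le> h i \<Longrightarrow> f h = p h"
    using assms(1) by (elim eventually_polyE) blast
  moreover obtain q M where "is_poly_fun r q" "\<And>h. \<forall>i<r. M \<le> h i \<Longrightarrow> g h = q h"
    using assms(2) by (elim eventually_polyE) blast
  ultimately show ?thesis
    by (intro eventually_polyI[where N = "max N M" and p = "\<lambda>h. p h + q h"] is_poly_fun_add) auto
qed

lemma eventually_poly_diff:
  assumes "eventually_poly r f" "eventually_poly r g"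
  shows "eventually_poly r (\<lambda>h. f h - g h)"
proof -
  obtain p N where "is_poly_fun r p" "\<And>h. \<forall>i<r. N \<le> h i \<Longrightarrow> f h = p h"
    using assms(1) by (elim eventually_polyE) blast
  moreover obtain q M where "is_poly_fun r q" "\<And>h. \<forall>i<r. M \<le> h i \<Longrightarrow> g h = q h"
    using assms(2) by (elim eventually_polyE) blast
  ultimately show ?thesis
    by (intro eventually_polyI[where N = "max N M" and p = "\<lambda>h. p h - q h"] is_poly_fun_diff) auto
qed

lemma eventually_poly_sum:
  "finite S \<Longrightarrow> (\<And>s. s \<in> S \<Longrightarrow> eventually_poly r (f s)) \<Longrightarrow>
    eventually_poly r (\<lambda>h. \<Sum>s\<in>S. f s h)"
proof (induction S rule: finite_induct)
  case empty
  show ?case by (simp add: eventually_polyI[OF is_poly_fun_const])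
next
  case (insert s S)
  then show ?case by (simp add: eventually_poly_add)
qed

section \<open>Dickson's lemma\<close>

lemma ex_pointwise_le_pair:
  fixes s :: "nat \<Rightarrow> 'i \<Rightarrow> nat"
  assumes "finite I"
  obtains a b where "a < b" "\<forall>p\<in>I. s a p \<le> s b p"
proof -
  obtain enc :: "'i set \<Rightarrow> nat" where enc: "bij_betw enc (Pow I) {0..<card (Pow I)}"
    using ex_bij_betw_finite_nat assms by blast
  define up where "up a b = {p\<in>I. s a p \<le> s b p}" for a b
  \<comment> \<open>Colour a pair by the set of coordinates on which the sequence does not decrease.\<close>
  define col where "col X = enc (up (Min X) (Max X))" for X
  have "col {a, b} < card (Pow I)" for a b
    using bij_betwE[OF enc] by (auto simp: col_def up_def)
  then obtain Y t where Y: "infinite Y" "\<forall>a\<in>Y. \<forall>b\<in>Y. a \<noteq> b \<longrightarrow> col {a, b} = t"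
    using Ramsey2[of "UNIV :: nat set" col "card (Pow I)"] by blast
  have col_pair: "col {a, b} = enc (up a b)" if "a < b" for a b
    using that by (simp add: col_def)
  obtain a0 where "a0 \<in> Y" using infinite_imp_nonempty[OF Y(1)] by blast
  moreover obtain b0 where "b0 \<in> Y" "a0 < b0" using Y(1) unfolding infinite_nat_iff_unbounded by blast
  ultimately have ab0: "a0 \<in> Y" "b0 \<in> Y" "a0 < b0" by blast+
  have up_const: "up a b = up a0 b0" if "a \<in> Y" "b \<in> Y" "a < b" for a b
  proof -
    have "col {a, b} = t" "col {a0, b0} = t" using Y(2) that ab0 by auto
    then have "enc (up a b) = enc (up a0 b0)" using col_pair that(3) ab0(3) by simp
    then show ?thesis
      using bij_betw_imp_inj_on[OF enc] by (auto dest: inj_onD simp: up_def)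
  qed
  show ?thesis
  proof (cases "up a0 b0 = I")
    case True
    then show ?thesis using that ab0(3) by (auto simp: up_def)
  next
    case False
    then obtain p where p: "p \<in> I" "p \<notin> up a0 b0" by (auto simp: up_def)
    have decr: "s b p < s a p" if "a \<in> Y" "b \<in> Y" "a < b" for a b
    proof -
      have "p \<notin> up a b" using up_const[OF that] p(2) by simp
      then show ?thesis using p(1) by (simp add: up_def not_le)
    qed
    from ex_has_least_nat[of "\<lambda>a. a \<in> Y" a0 "\<lambda>a. s a p", OF ab0(1)]
    obtain a where a: "a \<in> Y" "\<forall>b. b \<in> Y \<longrightarrow> s a p \<le> s b p" by blast
    obtain b where b: "b \<in> Y" "a < b"
      using Y(1) unfolding infinite_nat_iff_unbounded by blast
    have "s b p < s a p" using decr[OF a(1) b] .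
    moreover have "s a p \<le> s b p" using a(2) b(1) by blast
    ultimately show ?thesis by simp
  qed
qed

lemma dickson_finite_basis:
  fixes U :: "('i \<Rightarrow> nat) set"
  assumes I: "finite I" and U: "\<forall>x\<in>U. \<forall>p. p \<notin> I \<longrightarrow> x p = 0"
  obtains M where "finite M" "M \<subseteq> U" "\<forall>x\<in>U. \<exists>m\<in>M. m \<le> x"
proof -
  define Mn where "Mn = {x\<in>U. \<forall>y\<in>U. y \<le> x \<longrightarrow> y = x}"
  have above_Mn: "\<exists>m\<in>Mn. m \<le> x" if "x \<in> U" for x
    using that
  proof (induction "\<Sum>p\<in>I. x p" arbitrary: x rule: less_induct)
    case less
    show ?case
    proof (cases "x \<in> Mn")
      case False
      then obtain y where y: "y \<in> U" "y \<le> x" "y \<noteq> x"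
        using less.prems by (auto simp: Mn_def)
      then have "\<not> x \<le> y" by (simp add: order_antisym)
      then obtain p where p: "y p < x p" using y(2) by (auto simp: le_fun_def not_le)
      have "p \<in> I"
      proof (rule ccontr)
        assume "p \<notin> I"
        then have "x p = 0" "y p = 0" using U y(1) less.prems by auto
        then show False using p by simp
      qed
      with p have "(\<Sum>p\<in>I. y p) < (\<Sum>p\<in>I. x p)"
        using y(2) I by (intro sum_strict_mono_ex1) (auto simp: le_fun_def)
      then obtain m where "m \<in> Mn" "m \<le> y" using less.hyps y(1) by blast
      then show ?thesis using y(2) order_trans by blast
    qed auto
  qed
  have "finite Mn"
  proof (rule ccontr)
    assume "infinite Mn"
    then obtain sq :: "nat \<Rightarrow> _" where sq: "inj sq" "range sq \<subseteq> Mn"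
      unfolding infinite_iff_countable_subset by blast
    obtain a b where ab: "a < b" "\<forall>p\<in>I. sq a p \<le> sq b p"
      using ex_pointwise_le_pair[OF I] by blast
    have "sq a \<in> U" "sq b \<in> Mn" using sq(2) by (auto simp: Mn_def)
    have "sq a \<le> sq b"
    proof (rule le_funI)
      fix p
      show "sq a p \<le> sq b p"
        using ab(2) U \<open>sq a \<in> U\<close> by (cases "p \<in> I") auto
    qed
    then have "sq a = sq b" using \<open>sq a \<in> U\<close> \<open>sq b \<in> Mn\<close> by (simp add: Mn_def)
    then show False using sq(1) ab(1) by (auto dest: injD)
  qed
  then show ?thesis using that above_Mn by (auto simp: Mn_def)
qed

section \<open>Arrays with prescribed row sums\<close>

definition index_set :: "nat \<Rightarrow> (nat \<Rightarrow> nat) \<Rightarrow> (nat \<times> nat) set" where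
  "index_set r k = (SIGMA i:{..<r}. {..<k i})"

text \<open>In the application, \<open>x (i, j)\<close> counts how often the \<open>j\<close>-th element of \<open>A\<^sub>i\<close> is used.\<close>
definition arrays :: "nat \<Rightarrow> (nat \<Rightarrow> nat) \<Rightarrow> (nat \<times> nat \<Rightarrow> nat) set" where
  "arrays r k = {x. \<forall>p. p \<notin> index_set r k \<longrightarrow> x p = 0}"

definition row_sum :: "(nat \<Rightarrow> nat) \<Rightarrow> (nat \<times> nat \<Rightarrow> nat) \<Rightarrow> nat \<Rightarrow> nat" where
  "row_sum k x i = (\<Sum>j<k i. x (i, j))"

definition layer :: "nat \<Rightarrow> (nat \<Rightarrow> nat) \<Rightarrow> (nat \<Rightarrow> nat) \<Rightarrow> (nat \<times> nat \<Rightarrow> nat) set" where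
  "layer r k h = {x \<in> arrays r k. \<forall>i<r. row_sum k x i = h i}"

lemma finite_index_set: "finite (index_set r k)"
  by (simp add: index_set_def)

lemma layer_subset_arrays: "layer r k h \<subseteq> arrays r k"
  by (simp add: layer_def)

lemma finite_lists_with_sum: "finite {l :: nat list. length l = m \<and> sum_list l = t}"
  by (rule finite_subset[OF _ finite_lists_length_eq[of "{..t}" m]])
    (auto dest: member_le_sum_list)

definition array_of_rows :: "nat \<Rightarrow> (nat \<Rightarrow> nat) \<Rightarrow> (nat \<Rightarrow> nat list) \<Rightarrow> nat \<times> nat \<Rightarrow> nat" where
  "array_of_rows r k L = (\<lambda>(i, j). if i < r \<and> j < k i then L i ! j else 0)"

lemma array_of_rows_in_layer:
  assumes L: "L \<in> (\<Pi>\<^sub>E i\<in>{..<r}. {l. length l = k i \<and> sum_list l = h i})"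
  shows "array_of_rows r k L \<in> layer r k h"
proof -
  have "array_of_rows r k L \<in> arrays r k"
    by (auto simp: array_of_rows_def arrays_def index_set_def)
  moreover have "row_sum k (array_of_rows r k L) i = h i" if "i < r" for i
  proof -
    have "length (L i) = k i" "sum_list (L i) = h i" using L that by auto
    then show ?thesis
      using that by (simp add: array_of_rows_def row_sum_def sum_list_sum_nth atLeast0LessThan)
  qed
  ultimately show ?thesis by (simp add: layer_def)
qed

lemma bij_betw_layer_rows:
  "bij_betw (\<lambda>x. \<lambda>i\<in>{..<r}. map (\<lambda>j. x (i, j)) [0..<k i]) (layer r k h)
     (\<Pi>\<^sub>E i\<in>{..<r}. {l. length l = k i \<and> sum_list l = h i})"
proof (rule bij_betw_byWitness[where f' = "array_of_rows r k"])
  show "\<forall>x\<in>layer r k h. array_of_rows r k (\<lambda>i\<in>{..<r}. map (\<lambda>j. x (i, j)) [0..<k i]) = x"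
    by (auto simp: array_of_rows_def layer_def arrays_def index_set_def fun_eq_iff)
  show "\<forall>L\<in>\<Pi>\<^sub>E i\<in>{..<r}. {l. length l = k i \<and> sum_list l = h i}.
      (\<lambda>i\<in>{..<r}. map (\<lambda>j. array_of_rows r k L (i, j)) [0..<k i]) = L"
  proof
    fix L assume L: "L \<in> (\<Pi>\<^sub>E i\<in>{..<r}. {l. length l = k i \<and> sum_list l = h i})"
    have "map (\<lambda>j. array_of_rows r k L (i, j)) [0..<k i] = L i" if "i < r" for i
    proof -
      have "length (L i) = k i" using L that by auto
      then show ?thesis using that by (intro nth_equalityI) (auto simp: array_of_rows_def)
    qed
    then show "(\<lambda>i\<in>{..<r}. map (\<lambda>j. array_of_rows r k L (i, j)) [0..<k i]) = L"
      using L by (auto simp: fun_eq_iff PiE_def extensional_def)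
  qed
  show "(\<lambda>x. \<lambda>i\<in>{..<r}. map (\<lambda>j. x (i, j)) [0..<k i]) ` layer r k h
      \<subseteq> (\<Pi>\<^sub>E i\<in>{..<r}. {l. length l = k i \<and> sum_list l = h i})"
  proof (rule image_subsetI)
    fix x assume "x \<in> layer r k h"
    then show "(\<lambda>i\<in>{..<r}. map (\<lambda>j. x (i, j)) [0..<k i])
        \<in> (\<Pi>\<^sub>E i\<in>{..<r}. {l. length l = k i \<and> sum_list l = h i})"
      unfolding restrict_PiE_iff by (auto simp: layer_def row_sum_def sum_list_sum_nth atLeast0LessThan)
  qed
  show "array_of_rows r k ` (\<Pi>\<^sub>E i\<in>{..<r}. {l. length l = k i \<and> sum_list l = h i}) \<subseteq> layer r k h"
    using array_of_rows_in_layer by blast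
qed

lemma finite_layer: "finite (layer r k h)"
  using bij_betw_finite[OF bij_betw_layer_rows] by (simp add: finite_PiE finite_lists_with_sum)

lemma card_layer: "card (layer r k h) = (\<Prod>i<r. (h i + k i - 1) choose h i)"
  using bij_betw_same_card[OF bij_betw_layer_rows] by (simp add: card_PiE card_length_sum_list)

lemma real_binomial_as_product:
  assumes "1 \<le> m"
  shows "real ((t + m - 1) choose t) = (\<Prod>s<m - 1. real t + 1 + real s) / fact (m - 1)"
proof -
  obtain K where m: "m = Suc K" using assms by (cases m) auto
  have "(t + K) choose t = (t + K) choose K"
    using binomial_symmetric[of t "t + K"] by simp
  then show ?thesis
    by (simp add: m binomial_gbinomial gbinomial_pochhammer' pochhammer_prod atLeast0LessThan)
qed

lemma eventually_poly_card_shifted_layer: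
  assumes k: "\<forall>i<r. 1 \<le> k i"
  shows "eventually_poly r (\<lambda>h. real (card (layer r k (\<lambda>i. h i - d i))))"
proof (rule eventually_polyI)
  define P where "P h = (\<Prod>i<r. (\<Prod>s<k i - 1. real (h i) + (1 + real s - real (d i))) *
    (1 / fact (k i - 1)))" for h
  show "is_poly_fun r P"
    unfolding P_def
    by (intro is_poly_fun_prod is_poly_fun_mult is_poly_fun_add is_poly_fun_coord is_poly_fun_const)
      auto
  fix h assume h: "\<forall>i<r. (\<Sum>i<r. d i) \<le> h i"
  have row: "real ((h i - d i + k i - 1) choose (h i - d i)) =
      (\<Prod>s<k i - 1. real (h i) + (1 + real s - real (d i))) * (1 / fact (k i - 1))"
    if "i < r" for i
  proof -
    have "d i \<le> (\<Sum>i<r. d i)" using that by (intro member_le_sum) auto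
    then have "d i \<le> h i" using h that le_trans by blast
    then have "(\<Prod>s<k i - 1. real (h i - d i) + 1 + real s) =
        (\<Prod>s<k i - 1. real (h i) + (1 + real s - real (d i)))"
      by (intro prod.cong) (auto simp: of_nat_diff)
    then show ?thesis
      using real_binomial_as_product[of "k i" "h i - d i"] k that by (simp add: divide_inverse)
  qed
  have "real (card (layer r k (\<lambda>i. h i - d i))) =
      (\<Prod>i<r. real ((h i - d i + k i - 1) choose (h i - d i)))"
    by (simp add: card_layer)
  also have "\<dots> = P h"
    unfolding P_def by (rule prod.cong[OF refl], rule row) simp
  finally show "real (card (layer r k (\<lambda>i. h i - d i))) = P h" .
qed

lemma arrays_add: "x \<in> arrays r k \<Longrightarrow> y \<in> arrays r k \<Longrightarrow> x + y \<in> arrays r k"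
  by (simp add: arrays_def)

lemma arrays_sup: "x \<in> arrays r k \<Longrightarrow> y \<in> arrays r k \<Longrightarrow> sup x y \<in> arrays r k"
  by (simp add: arrays_def)

lemma row_sum_add: "row_sum k (x + y) i = row_sum k x i + row_sum k y i"
  by (simp add: row_sum_def sum.distrib)

lemma card_layer_above:
  assumes m: "m \<in> arrays r k" and h: "\<forall>i<r. row_sum k m i \<le> h i"
  shows "card {x \<in> layer r k h. m \<le> x} = card (layer r k (\<lambda>i. h i - row_sum k m i))"
proof (rule bij_betw_same_card[of "\<lambda>x. x - m"], rule bij_betw_byWitness[where f' = "\<lambda>y. y + m"])
  show "\<forall>x\<in>{x \<in> layer r k h. m \<le> x}. x - m + m = x"
    by (auto simp: fun_eq_iff le_fun_def)
  show "\<forall>y\<in>layer r k (\<lambda>i. h i - row_sum k m i). y + m - m = y"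
    by (simp add: fun_eq_iff)
  show "(\<lambda>x. x - m) ` {x \<in> layer r k h. m \<le> x} \<subseteq> layer r k (\<lambda>i. h i - row_sum k m i)"
  proof (rule image_subsetI)
    fix x assume x: "x \<in> {x \<in> layer r k h. m \<le> x}"
    then have "row_sum k (x - m) i = row_sum k x i - row_sum k m i" for i
      unfolding row_sum_def by (auto intro: sum_subtractf_nat simp: le_fun_def)
    then show "x - m \<in> layer r k (\<lambda>i. h i - row_sum k m i)"
      using x by (auto simp: layer_def arrays_def)
  qed
  show "(\<lambda>y. y + m) ` layer r k (\<lambda>i. h i - row_sum k m i) \<subseteq> {x \<in> layer r k h. m \<le> x}"
    using m h by (auto simp: layer_def row_sum_add arrays_add le_fun_def)
qed

lemma eventually_poly_card_layer_above:
  assumes k: "\<forall>i<r. 1 \<le> k i" and m: "m \<in> arrays r k"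
  shows "eventually_poly r (\<lambda>h. real (card {x \<in> layer r k h. m \<le> x}))"
proof (rule eventually_poly_cong[OF eventually_poly_card_shifted_layer[OF k]])
  fix h assume h: "\<forall>i<r. (\<Sum>i<r. row_sum k m i) \<le> h i"
  have "\<forall>i<r. row_sum k m i \<le> h i"
    using h member_le_sum[of _ "{..<r}" "row_sum k m"] le_trans by blast
  then show "real (card {x \<in> layer r k h. m \<le> x}) =
      real (card (layer r k (\<lambda>i. h i - row_sum k m i)))"
    by (simp add: card_layer_above[OF m])
qed

lemma real_card_upsets_remove:
  fixes S :: "'a::semilattice_sup set"
  assumes "finite S" "m \<in> M"
  shows "real (card (\<Union>m'\<in>M. {x \<in> S. m' \<le> x})) =
    real (card {x \<in> S. m \<le> x}) + real (card (\<Union>m'\<in>M - {m}. {x \<in> S. m' \<le> x}))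
    - real (card (\<Union>m'\<in>sup m ` (M - {m}). {x \<in> S. m' \<le> x}))"
proof -
  let ?A = "{x \<in> S. m \<le> x}" and ?W = "\<Union>m'\<in>M - {m}. {x \<in> S. m' \<le> x}"
  have "(\<Union>m'\<in>M. {x \<in> S. m' \<le> x}) = ?A \<union> ?W"
    using assms(2) by blast
  moreover have "?A \<inter> ?W = (\<Union>m'\<in>sup m ` (M - {m}). {x \<in> S. m' \<le> x})"
    by auto
  moreover have "card ?A + card ?W = card (?A \<union> ?W) + card (?A \<inter> ?W)"
    by (rule card_Un_Int) (auto intro: finite_subset[OF _ assms(1)])
  ultimately show ?thesis by (simp add: algebra_simps flip: of_nat_add)
qed

lemma eventually_poly_card_layer_union:
  assumes k: "\<forall>i<r. 1 \<le> k i"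
  shows "finite M \<Longrightarrow> M \<subseteq> arrays r k \<Longrightarrow>
    eventually_poly r (\<lambda>h. real (card (\<Union>m\<in>M. {x \<in> layer r k h. m \<le> x})))"
proof (induction "card M" arbitrary: M rule: less_induct)
  case less
  show ?case
  proof (cases "M = {}")
    case True
    then show ?thesis by (simp add: eventually_polyI[OF is_poly_fun_const])
  next
    case False
    then obtain m where m: "m \<in> M" by blast
    define M' where "M' = M - {m}"
    define M'' where "M'' = sup m ` M'"
    have M': "finite M'" "M' \<subseteq> arrays r k" "card M' < card M"
      using less.prems m card_gt_0_iff[of M] by (auto simp: M'_def)
    moreover have "finite M''" "card M'' < card M"
      using M' by (auto simp: M''_def intro: le_less_trans[OF card_image_le])
    moreover have "M'' \<subseteq> arrays r k"
      using M'(2) m less.prems(2) by (auto simp: M''_def intro!: arrays_sup)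
    ultimately have "eventually_poly r (\<lambda>h. real (card (\<Union>m\<in>M'. {x \<in> layer r k h. m \<le> x})))"
      "eventually_poly r (\<lambda>h. real (card (\<Union>m\<in>M''. {x \<in> layer r k h. m \<le> x})))"
      using less.hyps by blast+
    moreover have "eventually_poly r (\<lambda>h. real (card {x \<in> layer r k h. m \<le> x}))"
      using eventually_poly_card_layer_above[OF k] m less.prems(2) by blast
    ultimately show ?thesis
      unfolding real_card_upsets_remove[OF finite_layer m] M'_def[symmetric] M''_def[symmetric]
      by (intro eventually_poly_diff eventually_poly_add)
  qed
qed

lemma eventually_poly_card_layer_diff_upset:
  assumes k: "\<forall>i<r. 1 \<le> k i" and U: "U \<subseteq> arrays r k"
    and up: "\<And>x z. x \<in> U \<Longrightarrow> z \<in> arrays r k \<Longrightarrow> x \<le> z \<Longrightarrow> z \<in> U"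
  shows "eventually_poly r (\<lambda>h. real (card (layer r k h - U)))"
proof -
  have "\<forall>x\<in>U. \<forall>p. p \<notin> index_set r k \<longrightarrow> x p = 0"
    using U by (auto simp: arrays_def)
  then obtain M where M: "finite M" "M \<subseteq> U" "\<forall>x\<in>U. \<exists>m\<in>M. m \<le> x"
    by (rule dickson_finite_basis[OF finite_index_set])
  have union: "layer r k h \<inter> U = (\<Union>m\<in>M. {x \<in> layer r k h. m \<le> x})" for h
  proof (intro equalityI subsetI)
    fix x assume "x \<in> layer r k h \<inter> U"
    then show "x \<in> (\<Union>m\<in>M. {x \<in> layer r k h. m \<le> x})" using M(3) by blast
  next
    fix x assume "x \<in> (\<Union>m\<in>M. {x \<in> layer r k h. m \<le> x})"
    then obtain m where "m \<in> U" "x \<in> layer r k h" "m \<le> x" using M(2) by blast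
    then show "x \<in> layer r k h \<inter> U" using up layer_subset_arrays by blast
  qed
  have card_diff: "real (card (layer r k h - U)) =
      real (card (layer r k h)) - real (card (\<Union>m\<in>M. {x \<in> layer r k h. m \<le> x}))" for h
  proof -
    have "finite (layer r k h \<inter> U)" "card (layer r k h \<inter> U) \<le> card (layer r k h)"
      using finite_layer by (auto intro: card_mono)
    then show ?thesis by (simp add: card_Diff_subset_Int of_nat_diff flip: union)
  qed
  have "eventually_poly r (\<lambda>h. real (card (layer r k h)))"
    using eventually_poly_card_shifted_layer[OF k, of "\<lambda>_. 0"] by simp
  moreover have "M \<subseteq> arrays r k" using M(2) U by blast
  ultimately show ?thesis
    unfolding card_diff by (intro eventually_poly_diff eventually_poly_card_layer_union[OF k M(1)])
qed

section \<open>Sumsets as images of layers\<close>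

text \<open>Class \<open>comm_monoid_add\<close> has no scalar multiplication by naturals.\<close>
definition nat_scale :: "nat \<Rightarrow> 'a::comm_monoid_add \<Rightarrow> 'a" where
  "nat_scale t a = sum_list (replicate t a)"

lemma nat_scale_add: "nat_scale (s + t) a = nat_scale s a + nat_scale t a"
  by (simp add: nat_scale_def replicate_add)

lemma sum_list_eq_sum_count_list:
  fixes xs :: "'a::comm_monoid_add list"
  assumes "finite A" "set xs \<subseteq> A"
  shows "sum_list xs = (\<Sum>a\<in>A. nat_scale (count_list xs a) a)"
  using assms(2)
proof (induction xs)
  case Nil
  then show ?case by (simp add: nat_scale_def)
next
  case (Cons x xs)
  have "nat_scale (count_list (x # xs) a) a = nat_scale (count_list xs a) a + (if a = x then a else 0)"
    for a
    by (simp add: nat_scale_def add.commute)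
  then have "(\<Sum>a\<in>A. nat_scale (count_list (x # xs) a) a) = (\<Sum>a\<in>A. nat_scale (count_list xs a) a) + x"
    using Cons.prems assms(1) by (simp add: sum.distrib)
  then show ?case using Cons by (simp add: add.commute)
qed

lemma exists_list_with_counts:
  fixes g :: "nat \<Rightarrow> 'a::comm_monoid_add"
  shows "\<exists>xs. length xs = (\<Sum>j<k. y j) \<and> sum_list xs = (\<Sum>j<k. nat_scale (y j) (g j)) \<and> set xs \<subseteq> g ` {..<k}"
proof (induction k)
  case 0
  then show ?case by simp
next
  case (Suc k)
  then obtain xs where "length xs = (\<Sum>j<k. y j)" "sum_list xs = (\<Sum>j<k. nat_scale (y j) (g j))"
    "set xs \<subseteq> g ` {..<k}" by blast
  then show ?case
    by (intro exI[of _ "xs @ replicate (y k) (g k)"]) (auto simp: nat_scale_def)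
qed

lemma hfold_sumset_eq_counts:
  fixes A :: "'a::comm_monoid_add set" and k :: nat
  assumes g: "bij_betw g {..<k} A"
  shows "hfold_sumset h A = {(\<Sum>j<k. nat_scale (y j) (g j)) | y. (\<Sum>j<k. y j) = h}"
proof (intro equalityI subsetI)
  fix s assume "s \<in> hfold_sumset h A"
  then obtain xs where xs: "s = sum_list xs" "length xs = h" "set xs \<subseteq> A"
    unfolding hfold_sumset_def by blast
  have A: "finite A" using bij_betw_finite[OF g] by simp
  have "s = (\<Sum>j<k. nat_scale (count_list xs (g j)) (g j))"
    using xs sum_list_eq_sum_count_list[OF A xs(3)]
      sum.reindex_bij_betw[OF g, of "\<lambda>a. nat_scale (count_list xs a) a"] by simp
  moreover have "(\<Sum>j<k. count_list xs (g j)) = h"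
    using xs sum_count_set[OF xs(3) A] sum.reindex_bij_betw[OF g, of "count_list xs"] by simp
  ultimately show "s \<in> {(\<Sum>j<k. nat_scale (y j) (g j)) | y. (\<Sum>j<k. y j) = h}"
    unfolding mem_Collect_eq by (intro exI[of _ "\<lambda>j. count_list xs (g j)"]) simp
next
  fix s assume "s \<in> {(\<Sum>j<k. nat_scale (y j) (g j)) | y. (\<Sum>j<k. y j) = h}"
  then obtain y where "s = (\<Sum>j<k. nat_scale (y j) (g j))" "(\<Sum>j<k. y j) = h" by blast
  moreover obtain xs where "length xs = (\<Sum>j<k. y j)"
    "sum_list xs = (\<Sum>j<k. nat_scale (y j) (g j))" "set xs \<subseteq> g ` {..<k}"
    using exists_list_with_counts by blast
  ultimately have "s = sum_list xs" "length xs = h" "set xs \<subseteq> A"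
    using bij_betw_imp_surj_on[OF g] by auto
  then show "s \<in> hfold_sumset h A" unfolding hfold_sumset_def by blast
qed

definition weighted_sum ::
  "nat \<Rightarrow> (nat \<Rightarrow> nat) \<Rightarrow> (nat \<Rightarrow> nat \<Rightarrow> 'a::comm_monoid_add) \<Rightarrow> (nat \<times> nat \<Rightarrow> nat) \<Rightarrow> 'a" where
  "weighted_sum r k e x = (\<Sum>i<r. \<Sum>j<k i. nat_scale (x (i, j)) (e i j))"

lemma weighted_sum_add: "weighted_sum r k e (x + y) = weighted_sum r k e x + weighted_sum r k e y"
  by (simp add: weighted_sum_def nat_scale_add sum.distrib)

lemma multi_sumset_subset_image:
  fixes A :: "nat \<Rightarrow> 'a::comm_monoid_add set"
  assumes e: "\<forall>i<r. bij_betw (e i) {..<k i} (A i)"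
  shows "multi_sumset B A h r \<subseteq> (\<lambda>(b, x). b + weighted_sum r k e x) ` (B \<times> layer r k h)"
proof
  fix s assume "s \<in> multi_sumset B A h r"
  then obtain b u where bu: "s = b + (\<Sum>i<r. u i)" "b \<in> B" "\<forall>i<r. u i \<in> hfold_sumset (h i) (A i)"
    unfolding multi_sumset_def by blast
  have "\<forall>i\<in>{..<r}. \<exists>y. u i = (\<Sum>j<k i. nat_scale (y j) (e i j)) \<and> (\<Sum>j<k i. y j) = h i"
  proof
    fix i assume "i \<in> {..<r}"
    then have "u i \<in> {(\<Sum>j<k i. nat_scale (y j) (e i j)) | y. (\<Sum>j<k i. y j) = h i}"
      using bu(3) hfold_sumset_eq_counts[of "e i" "k i" "A i" "h i"] e by auto
    then show "\<exists>y. u i = (\<Sum>j<k i. nat_scale (y j) (e i j)) \<and> (\<Sum>j<k i. y j) = h i"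
      by auto
  qed
  then obtain Y where Y: "\<And>i. i < r \<Longrightarrow>
      u i = (\<Sum>j<k i. nat_scale (Y i j) (e i j)) \<and> (\<Sum>j<k i. Y i j) = h i"
    using bchoice[of "{..<r}"] by (metis lessThan_iff)
  define x where "x = (\<lambda>(i, j). if i < r \<and> j < k i then Y i j else 0)"
  have "x \<in> layer r k h"
    using Y by (auto simp: x_def layer_def arrays_def index_set_def row_sum_def)
  moreover have "weighted_sum r k e x = (\<Sum>i<r. u i)"
    using Y by (simp add: weighted_sum_def x_def)
  ultimately show "s \<in> (\<lambda>(b, x). b + weighted_sum r k e x) ` (B \<times> layer r k h)"
    using bu(1,2) by force
qed

lemma image_subset_multi_sumset:
  fixes A :: "nat \<Rightarrow> 'a::comm_monoid_add set"
  assumes e: "\<forall>i<r. bij_betw (e i) {..<k i} (A i)"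
  shows "(\<lambda>(b, x). b + weighted_sum r k e x) ` (B \<times> layer r k h) \<subseteq> multi_sumset B A h r"
proof
  fix s assume "s \<in> (\<lambda>(b, x). b + weighted_sum r k e x) ` (B \<times> layer r k h)"
  then obtain b x where bx: "s = b + weighted_sum r k e x" "b \<in> B" "x \<in> layer r k h" by auto
  have "(\<Sum>j<k i. nat_scale (x (i, j)) (e i j)) \<in> hfold_sumset (h i) (A i)" if "i < r" for i
    using bx(3) that hfold_sumset_eq_counts[of "e i" "k i" "A i"] e
    by (auto simp: layer_def row_sum_def)
  then show "s \<in> multi_sumset B A h r"
    using bx(1,2) unfolding multi_sumset_def weighted_sum_def by blast
qed

lemma multi_sumset_eq_image:
  fixes A :: "nat \<Rightarrow> 'a::comm_monoid_add set"
  assumes "\<forall>i<r. bij_betw (e i) {..<k i} (A i)"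
  shows "multi_sumset B A h r = (\<lambda>(b, x). b + weighted_sum r k e x) ` (B \<times> layer r k h)"
  using multi_sumset_subset_image[OF assms] image_subset_multi_sumset[OF assms] by (rule equalityI)

section \<open>Counting values through least representatives\<close>

lemma card_image_eq_card_key_minimal:
  fixes key :: "'a \<Rightarrow> 'k::linorder"
  assumes R: "finite R" and key: "inj_on key R"
  shows "card (F ` R) = card {p \<in> R. \<forall>q\<in>R. F q = F p \<longrightarrow> key p \<le> key q}"
proof -
  let ?M = "{p \<in> R. \<forall>q\<in>R. F q = F p \<longrightarrow> key p \<le> key q}"
  have "inj_on F ?M"
  proof (rule inj_onI)
    fix p p' assume "p \<in> ?M" "p' \<in> ?M" "F p = F p'"
    then have "key p = key p'" "p \<in> R" "p' \<in> R" by (auto intro: order_antisym)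
    then show "p = p'" using key by (auto dest: inj_onD)
  qed
  moreover have "F ` R \<subseteq> F ` ?M"
  proof
    fix y assume "y \<in> F ` R"
    define Q where "Q = {q \<in> R. F q = y}"
    have Q: "finite (key ` Q)" "key ` Q \<noteq> {}"
      using R \<open>y \<in> F ` R\<close> by (auto simp: Q_def)
    then obtain p where p: "p \<in> Q" "key p = Min (key ` Q)"
      using Min_in by (metis imageE)
    have "key p \<le> key q" if "q \<in> Q" for q
      using p(2) Q(1) that by simp
    then have "p \<in> ?M" using p(1) by (auto simp: Q_def)
    then show "y \<in> F ` ?M" using p(1) by (auto simp: Q_def)
  qed
  ultimately have "bij_betw F ?M (F ` R)"
    by (auto simp: bij_betw_def)
  then show ?thesis by (simp add: bij_betw_same_card)
qed

lemma map_less_map_add: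
  fixes F G H :: "'p \<Rightarrow> 'b::{linorder, ordered_cancel_ab_semigroup_add}"
  shows "map F P < map G P \<Longrightarrow> map (F + H) P < map (G + H) P"
  by (induction P) (auto simp: add_strict_right_mono)

lemma exists_translation_compatible_key:
  assumes "finite B"
  obtains key :: "'b \<times> (nat \<times> nat \<Rightarrow> nat) \<Rightarrow> nat list"
  where "inj_on key (B \<times> arrays r k)"
    and "\<And>b b' x y w. key (b', y) < key (b, x) \<Longrightarrow> key (b', y + w) < key (b, x + w)"
proof -
  from ex_bij_betw_finite_nat[OF assms] obtain f :: "'b \<Rightarrow> nat" where "bij_betw f B {0..<card B}"
    by blast
  then have f: "inj_on f B" by (rule bij_betw_imp_inj_on)
  obtain P where P: "set P = index_set r k"
    using finite_list[OF finite_index_set] by blast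
  define key where "key = (\<lambda>(b, x). f b # map x P)"
  have "(b, x) = (b', x')" if "b \<in> B" "b' \<in> B" "x \<in> arrays r k" "x' \<in> arrays r k"
    "key (b, x) = key (b', x')" for b x b' x'
  proof -
    have "f b = f b'" "\<forall>p\<in>index_set r k. x p = x' p"
      using that(5) by (auto simp: key_def P[symmetric] map_eq_conv)
    then show ?thesis
      using f that(1-4) by (auto simp: arrays_def fun_eq_iff dest: inj_onD)
  qed
  then have "inj_on key (B \<times> arrays r k)"
    by (auto simp: inj_on_def)
  moreover have "key (b', y + w) < key (b, x + w)" if "key (b', y) < key (b, x)" for b b' x y w
    using that map_less_map_add[of y P x w] by (auto simp: key_def)
  ultimately show ?thesis by (rule that)
qed

definition non_least_reps ::
  "'b set \<Rightarrow> ('b \<Rightarrow> (nat \<times> nat \<Rightarrow> nat) \<Rightarrow> 'c) \<Rightarrow> ('b \<times> (nat \<times> nat \<Rightarrow> nat) \<Rightarrow> 'k::ord) \<Rightarrow>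
    nat \<Rightarrow> (nat \<Rightarrow> nat) \<Rightarrow> 'b \<Rightarrow> (nat \<times> nat \<Rightarrow> nat) set" where
  "non_least_reps B F key r k b = {x \<in> arrays r k. \<exists>b'\<in>B. \<exists>y\<in>arrays r k.
     (\<forall>i<r. row_sum k y i = row_sum k x i) \<and> F b' y = F b x \<and> key (b', y) < key (b, x)}"

lemma non_least_reps_upward_closed:
  assumes F: "\<And>b b' x y w. F b x = F b' y \<Longrightarrow> F b (x + w) = F b' (y + w)"
    and key: "\<And>b b' x y w. key (b', y) < key (b, x) \<Longrightarrow> key (b', y + w) < key (b, x + w)"
    and x: "x \<in> non_least_reps B F key r k b" and z: "z \<in> arrays r k" "x \<le> z"
  shows "z \<in> non_least_reps B F key r k b"
proof -
  obtain b' y where y: "b' \<in> B" "y \<in> arrays r k" "\<forall>i<r. row_sum k y i = row_sum k x i"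
    "F b' y = F b x" "key (b', y) < key (b, x)"
    using x by (auto simp: non_least_reps_def)
  define w where "w = z - x"
  have zw: "z = x + w" using z(2) by (auto simp: w_def le_fun_def fun_eq_iff)
  have "w \<in> arrays r k" using z(1) by (auto simp: w_def arrays_def)
  then have "y + w \<in> arrays r k" using y(2) by (rule arrays_add[rotated])
  moreover have "\<forall>i<r. row_sum k (y + w) i = row_sum k z i"
    using y(3) by (simp add: zw row_sum_add)
  moreover have "F b' (y + w) = F b z" using F[OF y(4)] by (simp add: zw)
  moreover have "key (b', y + w) < key (b, z)" using key[OF y(5)] by (simp add: zw)
  ultimately show ?thesis using y(1) z(1) by (auto simp: non_least_reps_def)
qed

lemma mem_non_least_reps_iff:
  assumes "x \<in> layer r k h"
  shows "x \<in> non_least_reps B F key r k b \<longleftrightarrow>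
    (\<exists>b'\<in>B. \<exists>y\<in>layer r k h. F b' y = F b x \<and> key (b', y) < key (b, x))"
  using assms by (auto simp: non_least_reps_def layer_def)

lemma card_image_layer_eq_sum:
  fixes key :: "'b \<times> (nat \<times> nat \<Rightarrow> nat) \<Rightarrow> 'k::linorder"
  assumes B: "finite B" and key: "inj_on key (B \<times> arrays r k)"
  shows "card ((\<lambda>(b, x). F b x) ` (B \<times> layer r k h)) =
    (\<Sum>b\<in>B. card (layer r k h - non_least_reps B F key r k b))"
proof -
  let ?R = "B \<times> layer r k h"
  have inj: "inj_on key ?R"
    by (rule inj_on_subset[OF key]) (use layer_subset_arrays in auto)
  have "card ((\<lambda>(b, x). F b x) ` ?R) =
      card {p \<in> ?R. \<forall>q\<in>?R. (\<lambda>(b, x). F b x) q = (\<lambda>(b, x). F b x) p \<longrightarrow> key p \<le> key q}"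
    by (rule card_image_eq_card_key_minimal) (use B finite_layer inj in auto)
  also have "\<dots> = card (SIGMA b:B. layer r k h - non_least_reps B F key r k b)"
    by (intro arg_cong[where f = card]) (auto simp: mem_non_least_reps_iff not_less; meson leD)
  also have "\<dots> = (\<Sum>b\<in>B. card (layer r k h - non_least_reps B F key r k b))"
    using B finite_layer by (simp add: card_SigmaI)
  finally show ?thesis .
qed

lemma eventually_poly_card_image_layer:
  fixes F :: "'b \<Rightarrow> (nat \<times> nat \<Rightarrow> nat) \<Rightarrow> 'c"
  assumes k: "\<forall>i<r. 1 \<le> k i" and B: "finite B"
    and F: "\<And>b b' x y w. F b x = F b' y \<Longrightarrow> F b (x + w) = F b' (y + w)"
  shows "eventually_poly r (\<lambda>h. real (card ((\<lambda>(b, x). F b x) ` (B \<times> layer r k h))))"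
proof -
  obtain key :: "'b \<times> (nat \<times> nat \<Rightarrow> nat) \<Rightarrow> nat list"
    where key: "inj_on key (B \<times> arrays r k)"
    and key_add: "\<And>b b' x y w. key (b', y) < key (b, x) \<Longrightarrow> key (b', y + w) < key (b, x + w)"
    by (rule exists_translation_compatible_key[OF B, where r = r and k = k]) auto
  have "eventually_poly r (\<lambda>h. real (card (layer r k h - non_least_reps B F key r k b)))" for b
    using non_least_reps_upward_closed[where F = F and key = key, OF F key_add]
    by (intro eventually_poly_card_layer_diff_upset[OF k]) (auto simp: non_least_reps_def)
  then have "eventually_poly r
      (\<lambda>h. \<Sum>b\<in>B. real (card (layer r k h - non_least_reps B F key r k b)))"
    by (intro eventually_poly_sum[OF B])
  then show ?thesis by (simp add: card_image_layer_eq_sum[OF B key])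
qed

theorem mainTheorem1:
  fixes A :: "nat \<Rightarrow> 'a::comm_monoid_add set" and B :: "'a set" and r :: nat
  assumes "r \<ge> 1"
    and "\<forall>i<r. finite (A i) \<and> A i \<noteq> {}"
    and "finite B" and "B \<noteq> {}"
  shows "\<exists>p. is_poly_fun r p \<and> (\<exists>N. \<forall>h. (\<forall>i<r. N \<le> h i) \<longrightarrow>
           real (card (multi_sumset B A h r)) = p h)"
proof -
  define k where "k i = card (A i)" for i
  have "\<forall>i\<in>{..<r}. \<exists>g. bij_betw g {..<k i} (A i)"
    using assms(2) ex_bij_betw_nat_finite by (auto simp: k_def atLeast0LessThan)
  then obtain e where e: "\<forall>i<r. bij_betw (e i) {..<k i} (A i)"
    using bchoice[of "{..<r}"] by (metis lessThan_iff)
  have k: "\<forall>i<r. 1 \<le> k i"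
    using assms(2) by (simp add: k_def Suc_le_eq card_gt_0_iff)
  have "eventually_poly r
      (\<lambda>h. real (card ((\<lambda>(b, x). b + weighted_sum r k e x) ` (B \<times> layer r k h))))"
    by (rule eventually_poly_card_image_layer[OF k assms(3)])
      (simp add: weighted_sum_add flip: add.assoc)
  then show ?thesis
    by (simp add: multi_sumset_eq_image[OF e] eventually_poly_def)
qed

end
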